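(* Assume (A1)–(A3) and $\alpha>1$, let $\mu>0$ and $LR_{target}>0$. Consider the problem of choosing parameters $\bar c\ge zMIC$ and $T_{bc}\ge0$ such that the profile $C_{bc}$ (equal to $\bar c$ on $[0,T_{bc}]$ and to $\bar c e^{-\mu(t-T_{bc})}$ for $t>T_{bc}$) satisfies $LR_{max}[C_{bc}]=LR_{target}$, with $AUC[C_{bc}]$ minimal. Let $c_{opt}$ be the unique solution in $(0,\infty)$ of $k'(c)=\frac{k(c)-r}{c}$ and $$\rho=\int_{zMIC}^{c_{opt}}\frac{k(u)-r}{u}\,du.$$ (i) If $\rho<\ln(10)\,LR_{target}\,\mu$, the solution is $\bar c=c_{opt}$ and $$T_{bc}=T_{bc,opt}=\frac{\ln(10)\,LR_{target}-\mu^{-1}\rho}{k(c_{opt})-r};$$ the maximal log-reduction $LR_{target}$ is reached at time $T^*=T_{bc,opt}+\frac1\mu\ln\left(\frac{c_{opt}}{zMIC}\right)$, and $$AUC_{bc,opt}=\left[\mu^{-1}+\frac{\ln(10)\,LR_{target}-\mu^{-1}\rho}{k(c_{opt})-r}\right]c_{opt}.$$ (ii) If $\rho\ge\ln(10)\,LR_{target}\,\mu$, the solution is $T_{bc}=0$ and $\bar c=c^*$, where $c^*$ is the solution of $\int_{zMIC}^{c^*}\frac{k(u)-r}{u}du=\ln(10)\,LR_{target}\,\mu$; so $C_{bc}(t)=c^*e^{-\mu t}$, the target is reached at $T^*=\frac1\mu\ln\left(\frac{c^*}{zMIC}\right)$, and $AUC_{bc,opt}=\mu^{-1}c^*$.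
   Context: Let $r>0$ and let $k:[0,\infty)\to[0,\infty)$ satisfy: (A1) $k(0)=0$, $k$ is continuous and strictly increasing on $[0,\infty)$, and twice differentiable on $(0,\infty)$; (A2) $\lim_{c\to\infty}k(c)=k_{max}<\infty$; (A3) either (i) (concave case) $k''(c)<0$ for all $c>0$, or (ii) (sigmoidal case) there is $c_{infl}>0$ with $k''(c)>0$ for $0<c<c_{infl}$ and $k''(c)<0$ for $c>c_{infl}$. Set $\alpha=k_{max}/r$, and let $zMIC$ be the unique $c>0$ with $k(c)=r$. For a non-negative $C\in L^1[0,\infty)$: $AUC[C]=\int_0^\infty C(t)dt$, $LR(T)=\frac{1}{\ln 10}\int_0^T[k(C(t))-r]dt$, $LR_{max}[C]=\max_{T\ge0}LR(T)$. The profile $C_{bc}$ is the one induced, under one-compartment pharmacokinetics $C'=V^{-1}d(t)-\mu C$, $C(0)=0$, by the bolus+continuous dosing schedule $d(t)=V\bar c[\delta(t)+\mu H(T_{bc}-t)]$ ($H$ the Heaviside function, $\mu>0$ the drug decay rate). *)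

theory Defs
  imports "HOL-Analysis.Analysis"
begin

definition zMIC :: "(real \<Rightarrow> real) \<Rightarrow> real \<Rightarrow> real" where
  "zMIC k r = (THE c. 0 < c \<and> k c = r)"

text \<open>Bolus + continuous concentration profile (explicit solution of the
one-compartment model with C(0)=0 and dosing V cbar [delta(t) + mu H(T - t)]),
considered for t >= 0.\<close>
definition Cbc :: "real \<Rightarrow> real \<Rightarrow> real \<Rightarrow> real \<Rightarrow> real" where
  "Cbc \<mu> cbar T t = (if t \<le> T then cbar else cbar * exp (- \<mu> * (t - T)))"

definition AUC :: "(real \<Rightarrow> real) \<Rightarrow> real" where
  "AUC C = integral {0..} C"

definition LR :: "(real \<Rightarrow> real) \<Rightarrow> real \<Rightarrow> (real \<Rightarrow> real) \<Rightarrow> real \<Rightarrow> real" where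
  "LR k r C T = (1 / ln 10) * integral {0..T} (\<lambda>t. k (C t) - r)"

definition LRmax :: "(real \<Rightarrow> real) \<Rightarrow> real \<Rightarrow> (real \<Rightarrow> real) \<Rightarrow> real" where
  "LRmax k r C = (SUP T\<in>{0..}. LR k r C T)"

definition feasible :: "(real \<Rightarrow> real) \<Rightarrow> real \<Rightarrow> real \<Rightarrow> real \<Rightarrow> real \<Rightarrow> real \<Rightarrow> bool" where
  "feasible k r \<mu> LRt cbar T \<longleftrightarrow>
     zMIC k r \<le> cbar \<and> 0 \<le> T \<and> LRmax k r (Cbc \<mu> cbar T) = LRt"

definition is_opt :: "(real \<Rightarrow> real) \<Rightarrow> real \<Rightarrow> real \<Rightarrow> real \<Rightarrow> real \<Rightarrow> real \<Rightarrow> bool" where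
  "is_opt k r \<mu> LRt cbar T \<longleftrightarrow>
     feasible k r \<mu> LRt cbar T \<and>
     (\<forall>c' T'. feasible k r \<mu> LRt c' T' \<longrightarrow> AUC (Cbc \<mu> cbar T) \<le> AUC (Cbc \<mu> c' T'))"

definition copt :: "(real \<Rightarrow> real) \<Rightarrow> (real \<Rightarrow> real) \<Rightarrow> real \<Rightarrow> real" where
  "copt k k' r = (THE c. 0 < c \<and> k' c = (k c - r) / c)"

definition rho :: "(real \<Rightarrow> real) \<Rightarrow> (real \<Rightarrow> real) \<Rightarrow> real \<Rightarrow> real" where
  "rho k k' r = integral {zMIC k r..copt k k' r} (\<lambda>u. (k u - r) / u)"

definition cstar :: "(real \<Rightarrow> real) \<Rightarrow> real \<Rightarrow> real \<Rightarrow> real \<Rightarrow> real" where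
  "cstar k r \<mu> LRt = (THE c. zMIC k r \<le> c \<and>
      integral {zMIC k r..c} (\<lambda>u. (k u - r) / u) = ln 10 * LRt * \<mu>)"

end

theory Submission
  imports Defs
begin

text \<open>
  For the profile with plateau \<open>c\<close> on \<open>[0, T]\<close> followed by exponential decay, the
  log-reduction grows while \<open>C \<ge> zMIC\<close> and decreases afterwards, so its maximum is attained
  when \<open>C\<close> falls back to \<open>zMIC\<close>. Substituting \<open>u = C(t)\<close> on the decay phase, this maximum
  is \<open>(T (k c - r) + I(c) / \<mu>) / ln 10\<close>, where \<open>R(u) = (k u - r) / u\<close> and \<open>I(c)\<close> is the
  integral of \<open>R\<close> over \<open>[zMIC, c]\<close>; the AUC is \<open>c T + c / \<mu>\<close>. With \<open>A = c T\<close>, admissible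
  doses satisfy \<open>A R(c) + I(c) / \<mu> = ln 10 LR_target\<close> and cost \<open>A + c / \<mu>\<close>.

  \<open>R\<close> is unimodal with its maximum at \<open>c_opt\<close>: its derivative has the sign of
  \<open>phi(u) = u k'(u) - (k u - r)\<close>, and \<open>phi' = u k''\<close> changes sign at most once. Comparing two
  admissible doses on the same side of \<open>c_opt\<close>, the mean value bound for \<open>I\<close> shows that the
  AUC strictly decreases towards \<open>c_opt\<close>. Hence \<open>c_opt\<close> is optimal if it is admissible with
  some \<open>T \<ge> 0\<close>, i.e. if \<open>I(c_opt) < \<mu> ln 10 LR_target\<close>; otherwise every admissible dose lies
  below the dose \<open>c*\<close> admissible with \<open>T = 0\<close>, which is then optimal.
\<close>

lemma Cbc_altdef: "Cbc \<mu> cbar T t = cbar * exp (- \<mu> * max 0 (t - T))"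
  unfolding Cbc_def by (auto simp: max_def)

lemma continuous_on_Cbc: "continuous_on S (Cbc \<mu> cbar T)"
  unfolding Cbc_altdef[abs_def] by (intro continuous_intros)

lemma Cbc_pos: "0 < cbar \<Longrightarrow> 0 < Cbc \<mu> cbar T t"
  unfolding Cbc_def by auto

lemma AUC_Cbc:
  assumes mu: "0 < \<mu>" and T: "0 \<le> T"
  shows "AUC (Cbc \<mu> cbar T) = cbar * T + cbar / \<mu>"
proof -
  have plateau: "(Cbc \<mu> cbar T has_integral cbar * T) {0..T}"
  proof -
    have "((\<lambda>_. cbar) has_integral cbar * T) {0..T}"
      using has_integral_const_real[of cbar 0 T] T by (simp add: mult.commute)
    then show ?thesis by (rule has_integral_cong[THEN iffD1, rotated]) (auto simp: Cbc_def)
  qed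
  have "((\<lambda>t. (cbar * exp (\<mu> * T)) * exp (- \<mu> * t)) has_integral
          (cbar * exp (\<mu> * T)) * (exp (- \<mu> * T) / \<mu>)) {T..}"
    by (intro has_integral_cmult_real has_integral_exp_minus_to_infinity mu)
  moreover have "(cbar * exp (\<mu> * T)) * (exp (- \<mu> * T) / \<mu>) = cbar / \<mu>"
    by (simp add: exp_minus field_simps)
  ultimately have decay: "(Cbc \<mu> cbar T has_integral cbar / \<mu>) {T..}"
    by (auto elim!: has_integral_cong[THEN iffD1, rotated]
        simp: Cbc_def algebra_simps simp flip: exp_add)
  have "(Cbc \<mu> cbar T has_integral cbar * T + cbar / \<mu>) ({0..T} \<union> {T..})"
    by (rule has_integral_Un[OF plateau decay]) (rule negligible_subset[of "{T}"], auto)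
  moreover have "{0..T} \<union> {T..} = {0::real..}" using T by auto
  ultimately show ?thesis unfolding AUC_def by (simp add: integral_unique)
qed

locale kill_rate =
  fixes k k' k'' :: "real \<Rightarrow> real" and r kmax :: real
  assumes r_pos: "0 < r"
    and A1_0: "k 0 = 0"
    and A1_cont: "continuous_on {0..} k"
    and A1_mono: "strict_mono_on {0..} k"
    and A1_d1: "\<forall>c>0. (k has_real_derivative k' c) (at c)"
    and A1_d2: "\<forall>c>0. (k' has_real_derivative k'' c) (at c)"
    and A2: "(k \<longlongrightarrow> kmax) at_top"
    and A3: "(\<forall>c>0. k'' c < 0) \<or>
             (\<exists>c_infl>0. (\<forall>c. 0 < c \<and> c < c_infl \<longrightarrow> k'' c > 0) \<and>
                         (\<forall>c>c_infl. k'' c < 0))"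
    and alpha_gt1: "kmax / r > 1"
begin

abbreviation zmic :: real where "zmic \<equiv> zMIC k r"

lemma r_less_kmax: "r < kmax"
  using alpha_gt1 r_pos by (simp add: divide_simps split: if_splits)

lemma k_less: "0 \<le> x \<Longrightarrow> x < y \<Longrightarrow> k x < k y"
  using A1_mono unfolding strict_mono_on_def by auto

lemma k_le: "0 \<le> x \<Longrightarrow> x \<le> y \<Longrightarrow> k x \<le> k y"
  using k_less[of x y] by (cases "x = y") auto

lemma continuous_on_k: "0 \<le> a \<Longrightarrow> continuous_on {a..b} k"
  using A1_cont by (rule continuous_on_subset) auto

lemma k_less_kmax: "0 \<le> c \<Longrightarrow> k c < kmax"
proof -
  assume c: "0 \<le> c"
  have "eventually (\<lambda>x. k (c + 1) \<le> k x) at_top"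
    using eventually_ge_at_top[of "c + 1"] by eventually_elim (use c k_le in auto)
  then have "k (c + 1) \<le> kmax" using tendsto_lowerbound[OF A2] by auto
  then show ?thesis using k_less[of c "c + 1"] c by auto
qed

lemma eventually_k_greater: "d < kmax \<Longrightarrow> \<exists>N. \<forall>x\<ge>N. d < k x"
  using order_tendstoD(1)[OF A2] by (auto simp: eventually_at_top_linorder)

lemma zMIC: "0 < zmic" "k zmic = r"
proof -
  obtain N where N: "\<forall>x\<ge>N. r < k x" using eventually_k_greater r_less_kmax by auto
  have "\<exists>x\<ge>0. x \<le> max N 1 \<and> k x = r"
    using N[rule_format, of "max N 1"] A1_0 r_pos
    by (intro IVT' continuous_on_k) auto
  then obtain x where x: "0 \<le> x" "x \<le> max N 1" "k x = r" by blast
  have "x \<noteq> 0" using x A1_0 r_pos by auto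
  have "\<exists>!c. 0 < c \<and> k c = r"
  proof (rule ex_ex1I)
    show "\<exists>c. 0 < c \<and> k c = r" using x \<open>x \<noteq> 0\<close> by (intro exI[of _ x]) auto
  next
    fix c c' assume "0 < c \<and> k c = r" "0 < c' \<and> k c' = r"
    then show "c = c'" using k_less[of c c'] k_less[of c' c] by (cases c c' rule: linorder_cases) auto
  qed
  then have "0 < zmic \<and> k zmic = r" unfolding zMIC_def by (rule theI')
  then show "0 < zmic" "k zmic = r" by auto
qed

lemma r_less_k_iff: "0 \<le> c \<Longrightarrow> r < k c \<longleftrightarrow> zmic < c"
  using k_less[of zmic c] k_le[of c zmic] zMIC by (cases "zmic < c") auto

lemma r_le_k_iff: "0 \<le> c \<Longrightarrow> r \<le> k c \<longleftrightarrow> zmic \<le> c"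
  using k_le[of zmic c] k_less[of c zmic] zMIC by (cases "zmic \<le> c") auto

lemma k'_cont: "0 < a \<Longrightarrow> continuous_on {a..b} k'"
  by (intro continuous_at_imp_continuous_on ballI DERIV_isCont[OF A1_d2[rule_format]]) auto

text \<open>Both cases of (A3) are covered by one inflection point, which is \<open>0\<close> in the concave case.\<close>
definition c_infl :: real where
  "c_infl = (SOME s. 0 \<le> s \<and> (\<forall>c. 0 < c \<and> c < s \<longrightarrow> 0 < k'' c) \<and> (\<forall>c>s. k'' c < 0))"

lemma c_infl:
  "0 \<le> c_infl" "\<And>c. 0 < c \<Longrightarrow> c < c_infl \<Longrightarrow> 0 < k'' c" "\<And>c. c_infl < c \<Longrightarrow> k'' c < 0"
proof -
  have "\<exists>s. 0 \<le> s \<and> (\<forall>c. 0 < c \<and> c < s \<longrightarrow> 0 < k'' c) \<and> (\<forall>c>s. k'' c < 0)"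
    using A3 by (metis less_eq_real_def less_le_not_le)
  from someI_ex[OF this] show "0 \<le> c_infl" "\<And>c. 0 < c \<Longrightarrow> c < c_infl \<Longrightarrow> 0 < k'' c"
      "\<And>c. c_infl < c \<Longrightarrow> k'' c < 0"
    unfolding c_infl_def[symmetric] by auto
qed

lemma k'_less: "0 < x \<Longrightarrow> x < y \<Longrightarrow> y \<le> c_infl \<Longrightarrow> k' x < k' y"
proof (rule DERIV_pos_imp_increasing_open[of x y k'])
  fix t assume "0 < x" "x < t" "t < y" "y \<le> c_infl"
  then show "\<exists>d. (k' has_real_derivative d) (at t) \<and> 0 < d"
    using A1_d2 c_infl(2)[of t] by (intro exI[of _ "k'' t"]) auto
qed (use k'_cont in auto)

lemma k'_greater: "0 < x \<Longrightarrow> c_infl \<le> x \<Longrightarrow> x < y \<Longrightarrow> k' y < k' x"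
proof (rule DERIV_neg_imp_decreasing_open[of x y k'])
  fix t assume "0 < x" "c_infl \<le> x" "x < t"
  then show "\<exists>d. (k' has_real_derivative d) (at t) \<and> d < 0"
    using A1_d2 c_infl(3)[of t] by (intro exI[of _ "k'' t"]) auto
qed (use k'_cont in auto)

lemma k'_nonneg: "0 < c \<Longrightarrow> 0 \<le> k' c"
proof (rule ccontr)
  assume c: "0 < c" and "\<not> 0 \<le> k' c"
  then obtain d where d: "0 < d" "\<forall>h>0. h < d \<longrightarrow> k (c + h) < k c"
    using DERIV_neg_dec_right A1_d1 by (metis not_le)
  have "k (c + d/2) < k c" using d by simp
  moreover have "k c < k (c + d/2)" using k_less[of c "c + d/2"] c d by simp
  ultimately show False by linarith
qed

lemma k'_pos: "0 < c \<Longrightarrow> 0 < k' c"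
  using k'_less[of "c/2" c] k'_nonneg[of "c/2"] k'_greater[of c "c+1"] k'_nonneg[of "c+1"]
  by (cases "c < c_infl") auto

text \<open>\<open>phi c / c\<^sup>2\<close> is the derivative of \<open>(k c - r) / c\<close>, so \<open>c_opt\<close> is the zero of \<open>phi\<close>.\<close>
definition phi :: "real \<Rightarrow> real" where
  "phi c = c * k' c - (k c - r)"

lemma phi_deriv: "0 < c \<Longrightarrow> (phi has_real_derivative c * k'' c) (at c)"
  unfolding phi_def[abs_def] using A1_d1 A1_d2
  by (auto intro!: derivative_eq_intros simp: algebra_simps)

lemma phi_cont: "0 < a \<Longrightarrow> continuous_on {a..b} phi"
  by (intro continuous_at_imp_continuous_on ballI DERIV_isCont[OF phi_deriv]) auto

lemma phi_pos_below: "0 < c \<Longrightarrow> c \<le> max c_infl zmic \<Longrightarrow> 0 < phi c"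
proof -
  assume c: "0 < c" "c \<le> max c_infl zmic"
  have up_to_zMIC: "0 < phi x" if "0 < x" "x \<le> zmic" for x
  proof -
    have "0 < x * k' x" using k'_pos that by auto
    moreover have "k x \<le> r" using k_le[of x zmic] that zMIC by auto
    ultimately show ?thesis unfolding phi_def by auto
  qed
  show ?thesis
  proof (cases "c \<le> zmic")
    case False
    have "phi zmic < phi c"
    proof (rule DERIV_pos_imp_increasing_open[of zmic c phi])
      fix t assume "zmic < t" "t < c"
      then have "0 < t * k'' t" using c False zMIC c_infl(2)[of t] by auto
      then show "\<exists>d. (phi has_real_derivative d) (at t) \<and> 0 < d"
        using phi_deriv[of t] \<open>zmic < t\<close> zMIC by auto
    qed (use False zMIC phi_cont in auto)
    then show ?thesis using up_to_zMIC[of zmic] zMIC by auto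
  qed (use up_to_zMIC c in auto)
qed

lemma phi_greater: "max c_infl zmic \<le> x \<Longrightarrow> x < y \<Longrightarrow> phi y < phi x"
proof (rule DERIV_neg_imp_decreasing_open[of x y phi])
  fix t assume "max c_infl zmic \<le> x" "x < t"
  then have "0 < t" "t * k'' t < 0" using zMIC c_infl(3)[of t] by (auto intro: mult_pos_neg)
  then show "\<exists>d. (phi has_real_derivative d) (at t) \<and> d < 0" using phi_deriv by auto
qed (use zMIC phi_cont in auto)

text \<open>For large \<open>b\<close>, \<open>k b\<close> is near \<open>kmax > r\<close> while \<open>b * k' b \<le> 2 (k b - k (b/2))\<close> by
  the mean value theorem and the decrease of \<open>k'\<close>.\<close>
lemma phi_eventually_neg: "\<exists>b>max c_infl zmic. phi b < 0"
proof -
  define \<delta> where "\<delta> = (kmax - r) / 8"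
  have "0 < \<delta>" using r_less_kmax unfolding \<delta>_def by auto
  then obtain N where N: "\<forall>x\<ge>N. kmax - \<delta> < k x"
    using eventually_k_greater[of "kmax - \<delta>"] by auto
  define b where "b = 2 * max N (max c_infl zmic)"
  have b: "N \<le> b/2" "max c_infl zmic \<le> b/2" "0 < b/2" using zMIC unfolding b_def by auto
  obtain \<xi> where \<xi>: "b/2 < \<xi>" "\<xi> < b" "k b - k (b/2) = (b - b/2) * k' \<xi>"
    using MVT2[of "b/2" b k k'] b A1_d1 by force
  have "k' b < k' \<xi>" using k'_greater[of \<xi> b] \<xi> b by auto
  then have "(b/2) * k' b \<le> k b - k (b/2)" using \<xi> b by auto
  moreover have "k b - k (b/2) < \<delta>" using N[rule_format, of "b/2"] b k_less_kmax[of b] by auto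
  moreover have "kmax - \<delta> < k b" using N b by auto
  ultimately have "phi b < 0" using r_less_kmax unfolding phi_def \<delta>_def by argo
  then show ?thesis using b by (intro exI[of _ b]) auto
qed

abbreviation c_opt :: real where "c_opt \<equiv> copt k k' r"

lemma c_opt: "max c_infl zmic < c_opt" "phi c_opt = 0"
proof -
  let ?s = "max c_infl zmic"
  have s: "0 < ?s" using zMIC by auto
  have zero_iff: "0 < c \<and> k' c = (k c - r) / c \<longleftrightarrow> 0 < c \<and> phi c = 0" for c
    unfolding phi_def by (auto simp: field_simps)
  have zero_above: "?s < c" if "0 < c" "phi c = 0" for c
    using phi_pos_below[of c] that by fastforce
  have "\<exists>!c. 0 < c \<and> phi c = 0"
  proof (rule ex_ex1I)
    obtain b where b: "?s < b" "phi b < 0" using phi_eventually_neg by auto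
    then obtain x where "?s \<le> x" "x \<le> b" "phi x = 0"
      using IVT2'[of phi b 0 ?s] phi_pos_below[of ?s] s phi_cont[of ?s b] by auto
    then show "\<exists>c. 0 < c \<and> phi c = 0" using s by (intro exI[of _ x]) auto
  next
    fix x y assume "0 < x \<and> phi x = 0" "0 < y \<and> phi y = 0"
    then show "x = y"
      using zero_above[of x] zero_above[of y] phi_greater[of x y] phi_greater[of y x]
      by (cases x y rule: linorder_cases) auto
  qed
  then have "0 < c_opt \<and> phi c_opt = 0" unfolding copt_def zero_iff by (rule theI')
  then show "?s < c_opt" "phi c_opt = 0" using zero_above by auto
qed

lemma zMIC_less_c_opt: "zmic < c_opt"
  using c_opt(1) by auto

lemma phi_pos: "0 < c \<Longrightarrow> c < c_opt \<Longrightarrow> 0 < phi c"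
  using phi_pos_below[of c] phi_greater[of c c_opt] c_opt
  by (cases "c \<le> max c_infl zmic") force+

lemma phi_neg: "c_opt < c \<Longrightarrow> phi c < 0"
  using phi_greater[of c_opt c] c_opt by auto

definition ratio :: "real \<Rightarrow> real" where
  "ratio u = (k u - r) / u"

lemma ratio_deriv: "0 < u \<Longrightarrow> (ratio has_real_derivative phi u / u\<^sup>2) (at u)"
  unfolding ratio_def[abs_def] phi_def using A1_d1
  by (auto intro!: derivative_eq_intros simp: power2_eq_square field_simps)

lemma ratio_cont: "0 < a \<Longrightarrow> continuous_on {a..b} ratio"
  by (intro continuous_at_imp_continuous_on ballI DERIV_isCont[OF ratio_deriv]) auto

lemma ratio_less: "0 < x \<Longrightarrow> x < y \<Longrightarrow> y \<le> c_opt \<Longrightarrow> ratio x < ratio y"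
proof (rule DERIV_pos_imp_increasing_open[of x y ratio])
  fix t assume "0 < x" "x < t" "t < y" "y \<le> c_opt"
  then show "\<exists>d. (ratio has_real_derivative d) (at t) \<and> 0 < d"
    using ratio_deriv[of t] phi_pos[of t] by auto
qed (use ratio_cont in auto)

lemma ratio_greater: "c_opt \<le> x \<Longrightarrow> x < y \<Longrightarrow> ratio y < ratio x"
proof (rule DERIV_neg_imp_decreasing_open[of x y ratio])
  fix t assume "c_opt \<le> x" "x < t"
  then show "\<exists>d. (ratio has_real_derivative d) (at t) \<and> d < 0"
    using ratio_deriv[of t] phi_neg[of t] zMIC_less_c_opt zMIC by (auto intro!: divide_neg_pos)
qed (use ratio_cont zMIC_less_c_opt zMIC in auto)

lemma ratio_pos: "zmic < u \<Longrightarrow> 0 < ratio u"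
  using r_less_k_iff[of u] zMIC unfolding ratio_def by auto

lemma k_minus_r_eq_ratio: "0 < c \<Longrightarrow> k c - r = c * ratio c"
  unfolding ratio_def by auto

definition ratio_integral :: "real \<Rightarrow> real" where
  "ratio_integral c = integral {zmic..c} ratio"

lemma rho_eq: "rho k k' r = ratio_integral c_opt"
  unfolding rho_def ratio_integral_def ratio_def ..

lemma ratio_integral_zMIC: "ratio_integral zmic = 0"
  unfolding ratio_integral_def by simp

lemma ratio_integral_diff:
  "zmic \<le> a \<Longrightarrow> a \<le> b \<Longrightarrow> ratio_integral b - ratio_integral a = integral {a..b} ratio"
  using Henstock_Kurzweil_Integration.integral_combine[where a=zmic and c=a and b=b and f=ratio]
    integrable_continuous_interval[OF ratio_cont[of zmic b]] zMIC
  unfolding ratio_integral_def by fastforce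

lemma continuous_on_ratio_integral: "continuous_on {zmic..b} ratio_integral"
  unfolding ratio_integral_def[abs_def]
  by (rule indefinite_integral_continuous_1 integrable_continuous_interval ratio_cont zMIC)+

lemma ratio_integral_deriv: "zmic < c \<Longrightarrow> (ratio_integral has_real_derivative ratio c) (at c)"
proof -
  assume c: "zmic < c"
  have "(ratio_integral has_real_derivative ratio c) (at c within {zmic..c + 1})"
    unfolding ratio_integral_def[abs_def]
    by (rule integral_has_real_derivative) (use ratio_cont zMIC c in auto)
  then show ?thesis using at_within_Icc_at[of zmic c "c + 1"] c by auto
qed

lemma ratio_integral_less: "zmic \<le> a \<Longrightarrow> a < b \<Longrightarrow> ratio_integral a < ratio_integral b"
  using integral_less_real[of a b "\<lambda>_. 0" ratio] ratio_cont[of a b] ratio_pos zMIC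
    ratio_integral_diff[of a b]
  by auto

lemma ratio_integral_diff_gt:
  "zmic \<le> a \<Longrightarrow> a < b \<Longrightarrow> b \<le> c_opt \<Longrightarrow> (b - a) * ratio a < ratio_integral b - ratio_integral a"
  using integral_less_real[of a b "\<lambda>_. ratio a" ratio] ratio_cont[of a b] ratio_less[of a] zMIC
    ratio_integral_diff[of a b]
  by auto

lemma ratio_integral_diff_lt:
  "c_opt \<le> a \<Longrightarrow> a < b \<Longrightarrow> ratio_integral b - ratio_integral a < (b - a) * ratio a"
  using integral_less_real[of a b ratio "\<lambda>_. ratio a"] ratio_cont[of a b] ratio_greater[of a]
    zMIC_less_c_opt zMIC ratio_integral_diff[of a b]
  by auto

definition time_at_MIC :: "real \<Rightarrow> real \<Rightarrow> real \<Rightarrow> real" where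
  "time_at_MIC \<mu> cbar T = T + ln (cbar / zmic) / \<mu>"

context
  fixes \<mu> cbar T :: real
  assumes mu: "0 < \<mu>" and cbar: "zmic \<le> cbar"
begin

lemma T_le_time_at_MIC: "T \<le> time_at_MIC \<mu> cbar T"
  unfolding time_at_MIC_def using mu cbar zMIC by auto

lemma Cbc_decay_eq:
  "T \<le> t \<Longrightarrow> Cbc \<mu> cbar T t = zmic * exp (\<mu> * (time_at_MIC \<mu> cbar T - t))"
proof -
  assume t: "T \<le> t"
  have "zmic * exp (\<mu> * (time_at_MIC \<mu> cbar T - t))
      = zmic * exp (ln (cbar / zmic)) * exp (- \<mu> * (t - T))"
    unfolding time_at_MIC_def using mu by (simp add: algebra_simps flip: exp_add)
  also have "\<dots> = cbar * exp (- \<mu> * (t - T))" using cbar zMIC by simp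
  finally show ?thesis using t unfolding Cbc_def by auto
qed

lemma zMIC_le_Cbc: "t \<le> time_at_MIC \<mu> cbar T \<Longrightarrow> zmic \<le> Cbc \<mu> cbar T t"
  using Cbc_decay_eq[of t] mu zMIC cbar by (cases "T \<le> t") (auto simp: Cbc_def)

lemma Cbc_le_zMIC: "time_at_MIC \<mu> cbar T \<le> t \<Longrightarrow> Cbc \<mu> cbar T t \<le> zmic"
  using Cbc_decay_eq[of t] T_le_time_at_MIC mu zMIC by (simp add: mult_nonneg_nonpos)

lemma continuous_on_kill_Cbc: "continuous_on S (\<lambda>t. k (Cbc \<mu> cbar T t) - r)"
proof -
  have "0 < Cbc \<mu> cbar T t" for t using Cbc_pos cbar zMIC by auto
  then show ?thesis
    by (intro continuous_intros continuous_on_compose2[OF A1_cont continuous_on_Cbc])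
      (auto simp: less_imp_le)
qed

text \<open>Substituting \<open>u = Cbc t\<close> on the decay phase, \<open>dt = - du / (\<mu> u)\<close>.\<close>
lemma has_integral_decay_phase:
  "((\<lambda>t. k (Cbc \<mu> cbar T t) - r) has_integral ratio_integral cbar / \<mu>)
     {T..time_at_MIC \<mu> cbar T}"
proof -
  define S where "S = time_at_MIC \<mu> cbar T"
  define E where "E t = zmic * exp (\<mu> * (S - t))" for t
  have E_T: "E T = cbar" using Cbc_decay_eq[of T] unfolding E_def S_def by (simp add: Cbc_def)
  have E_range: "E t \<in> {zmic..cbar}" if "t \<in> {T..S}" for t
  proof -
    have "\<mu> * (S - t) \<le> \<mu> * (S - T)" using that mu by (intro mult_left_mono) auto
    then have "E t \<le> E T" using zMIC unfolding E_def by simp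
    then show ?thesis using that mu zMIC E_T unfolding E_def by auto
  qed
  have E_deriv: "(E has_real_derivative - \<mu> * E t) (at t)" for t
    unfolding E_def by (auto intro!: derivative_eq_intros)
  define \<psi> where "\<psi> t = ratio_integral (E t)" for t
  have "continuous_on {T..S} \<psi>"
    unfolding \<psi>_def using E_range
    by (intro continuous_on_compose2[OF continuous_on_ratio_integral[of cbar]])
      (auto simp: E_def intro!: continuous_intros)
  moreover have "(\<psi> has_vector_derivative - \<mu> * (k (Cbc \<mu> cbar T t) - r)) (at t)"
    if t: "t \<in> {T<..<S}" for t
  proof -
    have "zmic < E t" using t mu zMIC unfolding E_def by auto
    then have "(\<psi> has_real_derivative ratio (E t) * (- \<mu> * E t)) (at t)"
      unfolding \<psi>_def by (intro DERIV_chain2[OF ratio_integral_deriv E_deriv])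
    moreover have "ratio (E t) * (- \<mu> * E t) = - \<mu> * (k (Cbc \<mu> cbar T t) - r)"
      using t \<open>zmic < E t\<close> zMIC Cbc_decay_eq[of t] unfolding E_def S_def ratio_def by auto
    ultimately show ?thesis by (simp only: has_real_derivative_iff_has_vector_derivative)
  qed
  ultimately have "((\<lambda>t. - \<mu> * (k (Cbc \<mu> cbar T t) - r)) has_integral \<psi> S - \<psi> T) {T..S}"
    using T_le_time_at_MIC unfolding S_def by (intro fundamental_theorem_of_calculus_interior) auto
  moreover have "\<psi> S - \<psi> T = - ratio_integral cbar"
    using Cbc_decay_eq[of T] ratio_integral_zMIC unfolding \<psi>_def E_def S_def
    by (simp add: Cbc_def)
  ultimately have "((\<lambda>t. (- 1 / \<mu>) * (- \<mu> * (k (Cbc \<mu> cbar T t) - r))) has_integral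
      (- 1 / \<mu>) * (- ratio_integral cbar)) {T..S}"
    by (intro has_integral_cmult_real) simp
  then show ?thesis using mu unfolding S_def by simp
qed

lemma LR_time_at_MIC:
  assumes T: "0 \<le> T"
  shows "LR k r (Cbc \<mu> cbar T) (time_at_MIC \<mu> cbar T)
    = (T * (k cbar - r) + ratio_integral cbar / \<mu>) / ln 10"
proof -
  have "integral {0..T} (\<lambda>t. k (Cbc \<mu> cbar T t) - r) = integral {0..T} (\<lambda>_. k cbar - r)"
    by (rule integral_cong) (auto simp: Cbc_def)
  then have "integral {0..T} (\<lambda>t. k (Cbc \<mu> cbar T t) - r) = T * (k cbar - r)" using T by simp
  moreover have
    "integral {T..time_at_MIC \<mu> cbar T} (\<lambda>t. k (Cbc \<mu> cbar T t) - r) = ratio_integral cbar / \<mu>"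
    using has_integral_decay_phase by (rule integral_unique)
  ultimately show ?thesis
    using Henstock_Kurzweil_Integration.integral_combine[of 0 T "time_at_MIC \<mu> cbar T"
        "\<lambda>t. k (Cbc \<mu> cbar T t) - r"]
      T T_le_time_at_MIC integrable_continuous_interval[OF continuous_on_kill_Cbc]
    unfolding LR_def by simp
qed

text \<open>The killing rate exceeds \<open>r\<close> exactly while the concentration is above \<open>zMIC\<close>.\<close>
lemma LR_le_LR_time_at_MIC:
  assumes T: "0 \<le> T" and T': "0 \<le> T'"
  shows "LR k r (Cbc \<mu> cbar T) T' \<le> LR k r (Cbc \<mu> cbar T) (time_at_MIC \<mu> cbar T)"
proof -
  define S where "S = time_at_MIC \<mu> cbar T"
  define g where "g t = k (Cbc \<mu> cbar T t) - r" for t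
  have int: "g integrable_on {a..b}" for a b
    unfolding g_def by (rule integrable_continuous_interval[OF continuous_on_kill_Cbc])
  have pos: "0 < Cbc \<mu> cbar T t" for t using Cbc_pos cbar zMIC by auto
  have "integral {0..T'} g \<le> integral {0..S} g"
  proof (cases "T' \<le> S")
    case True
    have "0 \<le> integral {T'..S} g"
      using int zMIC_le_Cbc r_le_k_iff[OF less_imp_le[OF pos]] unfolding g_def S_def
      by (intro integral_nonneg) auto
    then show ?thesis
      using Henstock_Kurzweil_Integration.integral_combine[of 0 T' S g] True T' int by simp
  next
    case False
    have "integral {S..T'} g \<le> integral {S..T'} (\<lambda>_. 0)"
      using int Cbc_le_zMIC k_le[of _ zmic] zMIC pos unfolding g_def S_def
      by (intro integral_le) (auto simp: less_imp_le)
    moreover have "0 \<le> S" using T T_le_time_at_MIC unfolding S_def by linarith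
    ultimately show ?thesis
      using Henstock_Kurzweil_Integration.integral_combine[of 0 S T' g] False int by simp
  qed
  then show ?thesis unfolding LR_def g_def S_def by (simp add: divide_right_mono)
qed

lemma LRmax_Cbc:
  assumes T: "0 \<le> T"
  shows "LRmax k r (Cbc \<mu> cbar T) = (T * (k cbar - r) + ratio_integral cbar / \<mu>) / ln 10"
proof -
  have "LRmax k r (Cbc \<mu> cbar T) = LR k r (Cbc \<mu> cbar T) (time_at_MIC \<mu> cbar T)"
    unfolding LRmax_def
    by (rule cSup_eq_maximum) (use T T_le_time_at_MIC LR_le_LR_time_at_MIC[OF T] in auto)
  then show ?thesis using LR_time_at_MIC[OF T] by simp
qed

end

end

locale dosing_problem = kill_rate +
  fixes \<mu> LRt :: real
  assumes mu_pos: "0 < \<mu>" and LRt_pos: "0 < LRt"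
begin

lemma feasible_iff:
  "feasible k r \<mu> LRt c T \<longleftrightarrow>
     zmic \<le> c \<and> 0 \<le> T \<and> T * (k c - r) + ratio_integral c / \<mu> = ln 10 * LRt"
proof (cases "zmic \<le> c \<and> 0 \<le> T")
  case True
  have "0 < ln (10::real)" by simp
  then show ?thesis
    unfolding feasible_def using True LRmax_Cbc[OF mu_pos, of c T] by (auto simp: divide_eq_eq)
qed (auto simp: feasible_def)

lemma feasible_zMIC_less: "feasible k r \<mu> LRt c T \<Longrightarrow> zmic < c"
  using feasible_iff[of c T] zMIC ratio_integral_zMIC LRt_pos by (cases "c = zmic") auto

lemma feasible_AUC: "feasible k r \<mu> LRt c T \<Longrightarrow> AUC (Cbc \<mu> c T) = c * T + c / \<mu>"
  using feasible_iff AUC_Cbc[OF mu_pos] by (auto simp: mult.commute)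

lemma feasible_unique_time: "feasible k r \<mu> LRt c T \<Longrightarrow> feasible k r \<mu> LRt c T' \<Longrightarrow> T' = T"
proof -
  assume f: "feasible k r \<mu> LRt c T" and f': "feasible k r \<mu> LRt c T'"
  then have "T' * (k c - r) = T * (k c - r)" unfolding feasible_iff by linarith
  moreover have "k c - r \<noteq> 0" using feasible_zMIC_less[OF f] r_less_k_iff[of c] zMIC by auto
  ultimately show "T' = T" by simp
qed

lemma is_opt_iff_strict_minimiser:
  assumes feas: "feasible k r \<mu> LRt c0 T0"
    and min: "\<And>c T. feasible k r \<mu> LRt c T \<Longrightarrow> c \<noteq> c0 \<Longrightarrow> AUC (Cbc \<mu> c0 T0) < AUC (Cbc \<mu> c T)"
  shows "is_opt k r \<mu> LRt c T \<longleftrightarrow> c = c0 \<and> T = T0"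
proof
  assume "is_opt k r \<mu> LRt c T"
  then have f: "feasible k r \<mu> LRt c T" and "AUC (Cbc \<mu> c T) \<le> AUC (Cbc \<mu> c0 T0)"
    using feas unfolding is_opt_def by auto
  then have "c = c0" using min[of c T] by fastforce
  then show "c = c0 \<and> T = T0" using f feasible_unique_time[OF feas] by auto
next
  assume "c = c0 \<and> T = T0"
  then show "is_opt k r \<mu> LRt c T"
    using feas min feasible_unique_time[OF feas] unfolding is_opt_def
    by (metis less_imp_le order_refl)
qed

lemma AUC_less_below_c_opt:
  assumes fa: "feasible k r \<mu> LRt a Ta" and fb: "feasible k r \<mu> LRt b Tb"
    and ab: "a < b" and b: "b \<le> c_opt"
  shows "AUC (Cbc \<mu> b Tb) < AUC (Cbc \<mu> a Ta)"
proof -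
  have a: "zmic < a" using feasible_zMIC_less[OF fa] .
  have Tb: "0 \<le> Tb" using fb feasible_iff by auto
  have eqs: "a * Ta * ratio a + ratio_integral a / \<mu> = b * Tb * ratio b + ratio_integral b / \<mu>"
    using fa fb a ab zMIC unfolding feasible_iff by (simp add: k_minus_r_eq_ratio mult_ac)
  have "(b - a) * ratio a / \<mu> < (ratio_integral b - ratio_integral a) / \<mu>"
    using ratio_integral_diff_gt[of a b] a ab b mu_pos by (simp add: divide_strict_right_mono)
  moreover have "b * Tb * ratio a \<le> b * Tb * ratio b"
    using ratio_less[of a b] a ab b zMIC Tb by (intro mult_left_mono) auto
  ultimately have "(b * Tb + (b - a) / \<mu>) * ratio a < a * Ta * ratio a"
    using eqs by (simp add: algebra_simps diff_divide_distrib)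
  then have "b * Tb + (b - a) / \<mu> < a * Ta" using ratio_pos[OF a] by simp
  then show ?thesis using fa fb feasible_AUC by (simp add: algebra_simps diff_divide_distrib)
qed

lemma AUC_less_above_c_opt:
  assumes fa: "feasible k r \<mu> LRt a Ta" and fb: "feasible k r \<mu> LRt b Tb"
    and a: "c_opt \<le> a" and ab: "a < b"
  shows "AUC (Cbc \<mu> a Ta) < AUC (Cbc \<mu> b Tb)"
proof -
  have a0: "zmic < a" using feasible_zMIC_less[OF fa] .
  have Tb: "0 \<le> Tb" using fb feasible_iff by auto
  have eqs: "a * Ta * ratio a + ratio_integral a / \<mu> = b * Tb * ratio b + ratio_integral b / \<mu>"
    using fa fb a0 ab zMIC unfolding feasible_iff by (simp add: k_minus_r_eq_ratio mult_ac)
  have "(ratio_integral b - ratio_integral a) / \<mu> < (b - a) * ratio a / \<mu>"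
    using ratio_integral_diff_lt[of a b] a ab mu_pos by (simp add: divide_strict_right_mono)
  moreover have "b * Tb * ratio b \<le> b * Tb * ratio a"
    using ratio_greater[of a b] a0 a ab zMIC Tb by (intro mult_left_mono) auto
  ultimately have "a * Ta * ratio a < (b * Tb + (b - a) / \<mu>) * ratio a"
    using eqs by (simp add: algebra_simps diff_divide_distrib)
  then have "a * Ta < b * Tb + (b - a) / \<mu>" using ratio_pos[OF a0] by simp
  then show ?thesis using fa fb feasible_AUC by (simp add: algebra_simps diff_divide_distrib)
qed

lemma feasible_time_at_MIC_LR:
  "feasible k r \<mu> LRt c T \<Longrightarrow> LR k r (Cbc \<mu> c T) (time_at_MIC \<mu> c T) = LRt"
  using LR_time_at_MIC[OF mu_pos] feasible_iff by auto

definition T_opt :: real where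
  "T_opt = (ln 10 * LRt - ratio_integral c_opt / \<mu>) / (k c_opt - r)"

lemma feasible_c_opt:
  assumes "ratio_integral c_opt < ln 10 * LRt * \<mu>"
  shows "feasible k r \<mu> LRt c_opt T_opt"
proof -
  have "0 < k c_opt - r" using r_less_k_iff zMIC_less_c_opt zMIC by auto
  moreover have "ratio_integral c_opt / \<mu> < ln 10 * LRt" using assms mu_pos by (simp add: field_simps)
  ultimately show ?thesis
    unfolding feasible_iff T_opt_def using zMIC_less_c_opt by auto
qed

lemma is_opt_c_opt_iff:
  assumes "ratio_integral c_opt < ln 10 * LRt * \<mu>"
  shows "is_opt k r \<mu> LRt c T \<longleftrightarrow> c = c_opt \<and> T = T_opt"
proof (rule is_opt_iff_strict_minimiser[OF feasible_c_opt[OF assms]])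
  fix c T assume "feasible k r \<mu> LRt c T" "c \<noteq> c_opt"
  then show "AUC (Cbc \<mu> c_opt T_opt) < AUC (Cbc \<mu> c T)"
    using AUC_less_below_c_opt AUC_less_above_c_opt feasible_c_opt[OF assms]
    by (metis linorder_neqE_linordered_idom order_refl)
qed

abbreviation c_star :: real where "c_star \<equiv> cstar k r \<mu> LRt"

lemma c_star:
  assumes "ln 10 * LRt * \<mu> \<le> ratio_integral c_opt"
  shows "zmic \<le> c_star" "ratio_integral c_star = ln 10 * LRt * \<mu>"
proof -
  have "\<exists>!c. zmic \<le> c \<and> ratio_integral c = ln 10 * LRt * \<mu>"
  proof (rule ex_ex1I)
    show "\<exists>c. zmic \<le> c \<and> ratio_integral c = ln 10 * LRt * \<mu>"
      using IVT'[of ratio_integral zmic "ln 10 * LRt * \<mu>" c_opt] assms ratio_integral_zMIC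
        LRt_pos mu_pos zMIC_less_c_opt continuous_on_ratio_integral by force
  next
    fix x y assume "zmic \<le> x \<and> ratio_integral x = ln 10 * LRt * \<mu>"
      "zmic \<le> y \<and> ratio_integral y = ln 10 * LRt * \<mu>"
    then show "x = y"
      using ratio_integral_less[of x y] ratio_integral_less[of y x] by (cases x y rule: linorder_cases) auto
  qed
  then have "zmic \<le> c_star \<and> ratio_integral c_star = ln 10 * LRt * \<mu>"
    unfolding cstar_def ratio_integral_def ratio_def by (rule theI')
  then show "zmic \<le> c_star" "ratio_integral c_star = ln 10 * LRt * \<mu>" by auto
qed

lemma feasible_c_star: "ln 10 * LRt * \<mu> \<le> ratio_integral c_opt \<Longrightarrow> feasible k r \<mu> LRt c_star 0"
  using c_star mu_pos unfolding feasible_iff by auto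

text \<open>Every feasible dose lies below \<open>c_star\<close>, since the plateau only adds to the log-reduction.\<close>
lemma is_opt_c_star_iff:
  assumes "ln 10 * LRt * \<mu> \<le> ratio_integral c_opt"
  shows "is_opt k r \<mu> LRt c T \<longleftrightarrow> c = c_star \<and> T = 0"
proof (rule is_opt_iff_strict_minimiser[OF feasible_c_star[OF assms]])
  fix c T assume f: "feasible k r \<mu> LRt c T" and ne: "c \<noteq> c_star"
  have "zmic < c" using feasible_zMIC_less[OF f] .
  then have "0 \<le> \<mu> * (T * (k c - r))" using f feasible_iff r_less_k_iff[of c] zMIC mu_pos by auto
  moreover have "\<mu> * (T * (k c - r)) + ratio_integral c = ln 10 * LRt * \<mu>"
    using f mu_pos unfolding feasible_iff by (simp add: field_simps)
  ultimately have "ratio_integral c \<le> ratio_integral c_star" using c_star[OF assms] by linarith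
  then have "c < c_star" using ratio_integral_less[of c_star c] c_star[OF assms] ne by force
  moreover have "c_star \<le> c_opt"
    using ratio_integral_less[of c_opt c_star] c_star[OF assms] assms zMIC_less_c_opt by force
  ultimately show "AUC (Cbc \<mu> c_star 0) < AUC (Cbc \<mu> c T)"
    using AUC_less_below_c_opt[OF f feasible_c_star[OF assms]] by auto
qed

end

theorem theorem3:
  fixes k k' k'' :: "real \<Rightarrow> real" and r kmax \<mu> LRt :: real
  assumes r_pos: "0 < r"
    and A1_0: "k 0 = 0"
    and A1_nonneg: "\<forall>c\<ge>0. 0 \<le> k c"
    and A1_cont: "continuous_on {0..} k"
    and A1_mono: "strict_mono_on {0..} k"
    and A1_d1: "\<forall>c>0. (k has_real_derivative k' c) (at c)"
    and A1_d2: "\<forall>c>0. (k' has_real_derivative k'' c) (at c)"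
    and A2: "(k \<longlongrightarrow> kmax) at_top"
    and A3: "(\<forall>c>0. k'' c < 0) \<or>
             (\<exists>c_infl>0. (\<forall>c. 0 < c \<and> c < c_infl \<longrightarrow> k'' c > 0) \<and>
                         (\<forall>c>c_infl. k'' c < 0))"
    and alpha_gt1: "kmax / r > 1"
    and mu_pos: "0 < \<mu>"
    and LRt_pos: "0 < LRt"
  shows
   "(let z = zMIC k r; co = copt k k' r; \<rho> = rho k k' r;
         Topt = (ln 10 * LRt - \<rho> / \<mu>) / (k co - r);
         cs = cstar k r \<mu> LRt
     in (\<rho> < ln 10 * LRt * \<mu> \<longrightarrow>
           (\<forall>c T. is_opt k r \<mu> LRt c T \<longleftrightarrow> c = co \<and> T = Topt) \<and>
           LR k r (Cbc \<mu> co Topt) (Topt + (1/\<mu>) * ln (co / z)) = LRt \<and>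
           AUC (Cbc \<mu> co Topt) = (1/\<mu> + (ln 10 * LRt - \<rho> / \<mu>) / (k co - r)) * co)
      \<and> (\<rho> \<ge> ln 10 * LRt * \<mu> \<longrightarrow>
           (\<forall>c T. is_opt k r \<mu> LRt c T \<longleftrightarrow> c = cs \<and> T = 0) \<and>
           (\<forall>t\<ge>0. Cbc \<mu> cs 0 t = cs * exp (- \<mu> * t)) \<and>
           LR k r (Cbc \<mu> cs 0) ((1/\<mu>) * ln (cs / z)) = LRt \<and>
           AUC (Cbc \<mu> cs 0) = cs / \<mu>))"
proof -
  interpret dosing_problem k k' k'' r kmax \<mu> LRt
    by unfold_locales (use assms in auto)
  have time_i: "T_opt + (1/\<mu>) * ln (c_opt / zmic) = time_at_MIC \<mu> c_opt T_opt"
    and time_ii: "(1/\<mu>) * ln (c_star / zmic) = time_at_MIC \<mu> c_star 0"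
    unfolding time_at_MIC_def by simp_all
  show ?thesis
    unfolding Let_def rho_eq T_opt_def[symmetric] time_i time_ii
    using is_opt_c_opt_iff feasible_c_opt feasible_AUC feasible_time_at_MIC_LR
      is_opt_c_star_iff feasible_c_star
    by (auto simp: Cbc_def algebra_simps)
qed

end
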